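(* Work without the expansion bound (an expanded side $a_i$ may take any length $a_i'\ge a_i$). Let $A_1,\dots,A_k$ be $n$-dimensional boxes and $\mathcal{O}$ a set of orders of them each of which is a possible arrangement, and fix states realizing each of these arrangements. Let $s$ be the closed length of one side of one box $A$, and let $x\le s\le y$ be numbers such that every other side length occurring — every other closed side length of every box, and every expanded side length in any of the fixed states — is either less than $x$ or greater than $y$. Then for any $r$ with $x\le r\le y$, the collection obtained by replacing this side length $s$ of $A$ by $r$ can be put in every order of $\mathcal{O}$.
   Context: An $n$-dimensional box $A$ has closed side lengths $a_1\le\dots\le a_n$ (positive reals). A state of $A$ is either closed or expanded along one side $i$: $a_i$ is replaced by a length $a_i'\ge a_i$, other sides unchanged (only one side can expand). The dimension vector of a state is its side lengths sorted non-decreasingly. A box in some state fits inside another box in some state if each coordinate of the outer one's dimension vector is strictly larger than the corresponding coordinate of the inner one's. An order $X_1,\dots,X_k$ (innermost to outermost) is a possible arrangement if each box can be given a state so that $X_j$ fits inside $X_{j+1}$ for all $j$; states may differ between arrangements. *)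

theory Defs
  imports Complex_Main
begin

text \<open>A box is given by the list of its closed side lengths (positive reals).\<close>
type_synonym box = "real list"

definition is_box :: "nat \<Rightarrow> box \<Rightarrow> bool" where
  "is_box n A \<longleftrightarrow> length A = n \<and> (\<forall>j<n. 0 < A ! j)"

text \<open>A state: None = closed; Some (i, l) = expanded along side i to length l.\<close>
type_synonym state = "(nat \<times> real) option"

definition valid_state :: "box \<Rightarrow> state \<Rightarrow> bool" where
  "valid_state A st = (case st of None \<Rightarrow> True
      | Some (i, l) \<Rightarrow> i < length A \<and> A ! i \<le> l)"

definition side_lengths :: "box \<Rightarrow> state \<Rightarrow> real list" where
  "side_lengths A st = (case st of None \<Rightarrow> A | Some (i, l) \<Rightarrow> A[i := l])"

definition dimvec :: "box \<Rightarrow> state \<Rightarrow> real list" where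
  "dimvec A st = sort (side_lengths A st)"

definition fits :: "real list \<Rightarrow> real list \<Rightarrow> bool" where
  "fits u v \<longleftrightarrow> length u = length v \<and> (\<forall>j<length u. u ! j < v ! j)"

text \<open>An order of boxes 0..k-1: list of indices, innermost first.\<close>
definition is_order :: "nat \<Rightarrow> nat list \<Rightarrow> bool" where
  "is_order k \<sigma> \<longleftrightarrow> distinct \<sigma> \<and> set \<sigma> = {..<k}"

definition arranged_by :: "(nat \<Rightarrow> box) \<Rightarrow> nat list \<Rightarrow> (nat \<Rightarrow> state) \<Rightarrow> bool" where
  "arranged_by B \<sigma> S \<longleftrightarrow>
     (\<forall>i\<in>set \<sigma>. valid_state (B i) (S i)) \<and>
     (\<forall>j. Suc j < length \<sigma> \<longrightarrow>
        fits (dimvec (B (\<sigma> ! j)) (S (\<sigma> ! j)))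
             (dimvec (B (\<sigma> ! Suc j)) (S (\<sigma> ! Suc j))))"

definition possible_arrangement :: "(nat \<Rightarrow> box) \<Rightarrow> nat list \<Rightarrow> bool" where
  "possible_arrangement B \<sigma> \<longleftrightarrow> (\<exists>S. arranged_by B \<sigma> S)"

end

theory Submission
  imports Defs "HOL-Library.Multiset"
begin

text \<open>
  Fitting depends only on the relative order of the side lengths. Let
  \<open>T = {t. t < x \<or> y < t} \<union> {s}\<close> and let \<open>f\<close> send \<open>s\<close> to \<open>r\<close> and fix every other
  number. Then \<open>f\<close> is strictly increasing on \<open>T\<close>, every side length of every fixed
  state lies in \<open>T\<close>, and \<open>s\<close> occurs only once. Hence the modified boxes, in the same
  states, have as side lengths the images under \<open>f\<close> of the old ones; sorting commutes
  with \<open>f\<close>, and strict fitting is preserved by \<open>f\<close>. The states remain valid because an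
  expansion of the side \<open>s\<close> itself must have length \<open>> y \<ge> r\<close>.
\<close>

lemma sort_map_mono_on:
  fixes f :: "'a::linorder \<Rightarrow> 'b::linorder"
  assumes "mono_on (set xs) f"
  shows "sort (map f xs) = map f (sort xs)"
proof (rule properties_for_sort)
  show "mset (map f (sort xs)) = mset (map f xs)" by simp
  show "sorted (map f (sort xs))"
    using assms by (intro sorted_map_mono) simp_all
qed

lemma fits_map_strict_mono_on:
  assumes "fits u v" "set u \<subseteq> T" "set v \<subseteq> T" "strict_mono_on T f"
  shows "fits (map f u) (map f v)"
  using assms by (auto simp: fits_def subset_iff intro: strict_mono_onD)

lemma side_lengths_map:
  assumes "\<forall>(j, l) \<in> set_option st. f l = l"
  shows "side_lengths (map f A) st = map f (side_lengths A st)"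
  using assms by (cases st) (auto simp: side_lengths_def map_update)

lemma set_side_lengths_subset:
  assumes "set A \<subseteq> T" "\<forall>(j, l) \<in> set_option st. l \<in> T"
  shows "set (side_lengths A st) \<subseteq> T"
  using assms set_update_subset_insert by (cases st) (fastforce simp: side_lengths_def)+

lemma valid_state_map:
  assumes "valid_state A st" "mono_on T f" "set A \<subseteq> T"
    and "\<forall>(j, l) \<in> set_option st. l \<in> T \<and> f l = l"
  shows "valid_state (map f A) st"
proof (cases st)
  case (Some e)
  then obtain j l where st: "st = Some (j, l)" by fastforce
  with assms(1) have "j < length A" "A ! j \<le> l" by (simp_all add: valid_state_def)
  moreover from this assms(3) have "A ! j \<in> T" by (auto dest: nth_mem)
  moreover have "l \<in> T" "f l = l" using assms(4) st by auto
  ultimately have "f (A ! j) \<le> l" using mono_onD[OF assms(2)] by metis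
  with st \<open>j < length A\<close> show ?thesis by (simp add: valid_state_def)
qed (simp add: valid_state_def)

lemma dimvec_map:
  assumes "mono_on (set (side_lengths A st)) f" "\<forall>(j, l) \<in> set_option st. f l = l"
  shows "dimvec (map f A) st = map f (dimvec A st)"
  using assms by (simp add: dimvec_def side_lengths_map sort_map_mono_on)

lemma arranged_by_map:
  assumes arr: "arranged_by B \<sigma> S" and f: "strict_mono_on T f"
    and B': "\<And>i. i \<in> set \<sigma> \<Longrightarrow> B' i = map f (B i)"
    and sides: "\<And>i. i \<in> set \<sigma> \<Longrightarrow> set (B i) \<subseteq> T"
    and expansions: "\<And>i. i \<in> set \<sigma> \<Longrightarrow> \<forall>(j, l) \<in> set_option (S i). l \<in> T \<and> f l = l"
  shows "arranged_by B' \<sigma> S"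
proof -
  have mono: "mono_on T f"
    using f by (rule strict_mono_on_imp_mono_on)
  have in_T: "set (side_lengths (B i) (S i)) \<subseteq> T" if "i \<in> set \<sigma>" for i
    using expansions[OF that] by (intro set_side_lengths_subset[OF sides[OF that]]) auto
  have dimvec': "dimvec (B' i) (S i) = map f (dimvec (B i) (S i))" if "i \<in> set \<sigma>" for i
    unfolding B'[OF that] using monotone_on_subset[OF mono in_T[OF that]] expansions[OF that]
    by (intro dimvec_map) auto
  show ?thesis
    unfolding arranged_by_def
  proof (intro conjI allI impI ballI)
    fix i assume i: "i \<in> set \<sigma>"
    then have "valid_state (B i) (S i)"
      using arr by (simp add: arranged_by_def)
    then show "valid_state (B' i) (S i)"
      unfolding B'[OF i] using valid_state_map[OF _ mono sides[OF i] expansions[OF i]] by blast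
  next
    fix j assume j: "Suc j < length \<sigma>"
    let ?i = "\<sigma> ! j" and ?i' = "\<sigma> ! Suc j"
    have i: "?i \<in> set \<sigma>" "?i' \<in> set \<sigma>"
      using j by simp_all
    have "fits (dimvec (B ?i) (S ?i)) (dimvec (B ?i') (S ?i'))"
      using arr j by (simp add: arranged_by_def)
    moreover have "set (dimvec (B i) (S i)) \<subseteq> T" if "i \<in> set \<sigma>" for i
      using in_T[OF that] by (simp add: dimvec_def)
    ultimately show "fits (dimvec (B' ?i) (S ?i)) (dimvec (B' ?i') (S ?i'))"
      unfolding dimvec'[OF i(1)] dimvec'[OF i(2)] using i f by (blast intro: fits_map_strict_mono_on)
  qed
qed

lemma map_replace_unique_nth:
  assumes "p < length xs" "\<forall>j<length xs. j \<noteq> p \<longrightarrow> xs ! j \<noteq> xs ! p"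
  shows "map (\<lambda>t. if t = xs ! p then r else t) xs = xs[p := r]"
  using assms by (intro nth_equalityI) (auto simp: nth_list_update)

lemma fun_upd_list_update_eq_map_replace:
  assumes "p < length (B a)"
    and unique: "\<And>j. j < length (B i) \<Longrightarrow> (i, j) \<noteq> (a, p) \<Longrightarrow> B i ! j \<noteq> B a ! p"
  shows "(B(a := (B a)[p := r])) i = map (\<lambda>t. if t = B a ! p then r else t) (B i)"
proof (cases "i = a")
  case True
  with assms show ?thesis by (simp add: map_replace_unique_nth)
next
  case False
  with unique have "map (\<lambda>t. if t = B a ! p then r else t) (B i) = B i"
    by (intro map_idI) (auto simp: in_set_conv_nth)
  with False show ?thesis by simp
qed

theorem proposition26:
  fixes n k :: nat and B :: "nat \<Rightarrow> box" and Ords :: "nat list set"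
    and st :: "nat list \<Rightarrow> nat \<Rightarrow> state"
    and a p :: nat and s x y :: real
  assumes boxes: "\<forall>i<k. is_box n (B i)"
    and orders: "\<forall>\<sigma>\<in>Ords. is_order k \<sigma>"
    and realized: "\<forall>\<sigma>\<in>Ords. arranged_by B \<sigma> (st \<sigma>)"
    and a: "a < k" and p: "p < n"
    and s: "s = B a ! p"
    and xs: "x \<le> s" and sy: "s \<le> y"
    and other_closed: "\<forall>i<k. \<forall>j<n. (i, j) \<noteq> (a, p) \<longrightarrow> B i ! j < x \<or> y < B i ! j"
    and expanded: "\<forall>\<sigma>\<in>Ords. \<forall>i<k. \<forall>j l. st \<sigma> i = Some (j, l) \<longrightarrow> l < x \<or> y < l"
  shows "\<forall>r. x \<le> r \<and> r \<le> y \<longrightarrow>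
           (\<forall>\<sigma>\<in>Ords. possible_arrangement (B(a := (B a)[p := r])) \<sigma>)"
proof (intro allI impI ballI)
  fix r \<sigma> assume r: "x \<le> r \<and> r \<le> y" and \<sigma>: "\<sigma> \<in> Ords"
  define T where "T = {t. t < x \<or> y < t} \<union> {s}"
  define f where "f = (\<lambda>t. if t = s then r else t)"
  have set_\<sigma>: "set \<sigma> = {..<k}" and lengths: "\<And>i. i < k \<Longrightarrow> length (B i) = n"
    using orders \<sigma> boxes by (auto simp: is_order_def is_box_def)
  have other_ne_s: "B i ! j \<noteq> s" if "i < k" "j < n" "(i, j) \<noteq> (a, p)" for i j
    using other_closed that xs sy by fastforce
  have f: "strict_mono_on T f"
    using r xs sy by (auto simp: T_def f_def intro: strict_mono_onI)
  have sides: "set (B i) \<subseteq> T" if "i < k" for i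
    using other_closed that s lengths by (fastforce simp: T_def in_set_conv_nth)
  have B': "(B(a := (B a)[p := r])) i = map f (B i)" if i: "i < k" for i
    unfolding f_def s
  proof (rule fun_upd_list_update_eq_map_replace)
    show "p < length (B a)" using lengths[OF a] p by simp
    show "B i ! j \<noteq> B a ! p" if "j < length (B i)" "(i, j) \<noteq> (a, p)" for j
      using other_ne_s[OF i _ that(2)] that(1) lengths[OF i] s by simp
  qed
  have expansions: "\<forall>(j, l) \<in> set_option (st \<sigma> i). l \<in> T \<and> f l = l" if "i < k" for i
    using expanded \<sigma> that xs sy unfolding T_def f_def by fastforce
  have "arranged_by (B(a := (B a)[p := r])) \<sigma> (st \<sigma>)"
    using arranged_by_map[OF _ f, of B \<sigma> "st \<sigma>"] realized \<sigma> set_\<sigma> B' sides expansions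
    by simp
  then show "possible_arrangement (B(a := (B a)[p := r])) \<sigma>"
    unfolding possible_arrangement_def by blast
qed

end
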